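(* (a) The one-dimensional completely elliptic subspaces of $\mathbb{R}^3$ are exactly the four lines spanned by $(1,1,1)$, $(-1,1,1)$, $(1,-1,1)$, $(1,1,-1)$. (b) A two-dimensional subspace $S\subset\mathbb{R}^3$ with unit normal vector $\mathbf{w}=(w_1,w_2,w_3)$ is completely elliptic if and only if either $(w_1+w_2-w_3)(w_1-w_2+w_3)(-w_1+w_2+w_3)(w_1+w_2+w_3)>0$, or $\mathbf{w}$ is, up to sign, a unit multiple of one of the six vectors $(0,1,1)$, $(0,1,-1)$, $(1,0,1)$, $(1,0,-1)$, $(1,1,0)$, $(1,-1,0)$.
   Context: A linear subspace $S\subseteq\mathbb{R}^N$ of dimension $M$ is called completely elliptic if there exists a real $N\times M$ matrix $\mathbf{s}$ whose $M$ columns lie in $S$, whose $N$ rows are unit vectors of $\mathbb{R}^M$, and with $\operatorname{rank}\mathbf{s}=M$ (equivalently, the columns of $\mathbf{s}$ form a basis of $S$). Here $N=3$. *)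

theory Defs
  imports "HOL-Analysis.Analysis"
begin

text \<open>A real N x M matrix s is represented by the list cs of its M columns
(each a vector in R^3, so N = 3).  Row i of s is the vector
(cs!0 $ i, ..., cs!(M-1) $ i) in R^M; it is a unit vector iff the sum of
squares of its entries is 1.  The rank of s is the dimension of its column space.\<close>

definition completely_elliptic :: "(real^3) set \<Rightarrow> bool" where
  "completely_elliptic S \<longleftrightarrow> subspace S \<and>
     (\<exists>cs :: (real^3) list.
        length cs = dim S \<and>
        set cs \<subseteq> S \<and>
        (\<forall>i. (\<Sum>j<length cs. (cs ! j $ i)^2) = 1) \<and>
        dim (span (set cs)) = length cs)"

end

theory Submission
  imports Defs
begin

text \<open>
  If the columns \<open>a, b\<close> of the matrix lie in the plane \<open>w\<^sup>\<bottom>\<close>, its rows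
  \<open>r\<^sub>i = (a\<^sub>i, b\<^sub>i)\<close> are unit vectors of \<open>\<real>\<^sup>2\<close> with \<open>w\<^sub>1 r\<^sub>1 + w\<^sub>2 r\<^sub>2 + w\<^sub>3 r\<^sub>3 = 0\<close>:
  the vectors \<open>w\<^sub>i r\<^sub>i\<close> close up a triangle with side lengths \<open>\<bar>w\<^sub>i\<bar>\<close>. Heron's
  formula for this triangle, combined with the law of cosines, expresses the product in (b) as
  \<open>4 (w\<^sub>1 w\<^sub>2 det(r\<^sub>1, r\<^sub>2))\<^sup>2 = 4 (w\<^sub>1 w\<^sub>2 w\<^sub>3 det(w, a, b))\<^sup>2\<close>, which is positive
  exactly when no \<open>w\<^sub>i\<close> vanishes and \<open>a, b\<close> are independent. If some \<open>w\<^sub>k\<close> vanishes,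
  the two remaining rows force \<open>\<bar>w\<^sub>i\<bar> = \<bar>w\<^sub>j\<bar>\<close>. Conversely a nondegenerate triangle,
  and each of the six degenerate normals, yields explicit columns. In dimension one
  the single column must have all entries \<open>\<plusminus>1\<close>.
\<close>

unbundle cross3_syntax

text \<open>Sixteen times the squared area of a triangle with side lengths \<open>\<bar>x\<bar>, \<bar>y\<bar>, \<bar>z\<bar>\<close>.\<close>

definition heron_product :: "real \<Rightarrow> real \<Rightarrow> real \<Rightarrow> real" where
  "heron_product x y z = (x + y - z) * (x - y + z) * (- x + y + z) * (x + y + z)"

lemma heron_product_eq: "heron_product x y z = (2*x*y)^2 - (z^2 - x^2 - y^2)^2"
  unfolding heron_product_def by algebra

lemma heron_product_pos_imp_nonzero:
  assumes "heron_product x y z > 0"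
  shows "x \<noteq> 0" "y \<noteq> 0" "z \<noteq> 0"
proof -
  have "heron_product 0 y z = - ((y^2 - z^2)^2)" "heron_product x 0 z = - ((x^2 - z^2)^2)"
    "heron_product x y 0 = - ((x^2 - y^2)^2)"
    unfolding heron_product_def by (simp_all add: power2_eq_square algebra_simps)
  then show "x \<noteq> 0" "y \<noteq> 0" "z \<noteq> 0"
    using assms by auto
qed

lemma heron_product_unit_rows:
  fixes x y z a1 a2 a3 b1 b2 b3 :: real
  assumes "x*a1 + y*a2 + z*a3 = 0" "x*b1 + y*b2 + z*b3 = 0"
    and "a1^2 + b1^2 = 1" "a2^2 + b2^2 = 1" "a3^2 + b3^2 = 1"
  shows "heron_product x y z = 4*(x*y*(a1*b2 - a2*b1))^2"
proof -
  have "z*a3 = -(x*a1 + y*a2)" "z*b3 = -(x*b1 + y*b2)"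
    using assms(1,2) by linarith+
  then have "z^2 * (a3^2 + b3^2) = (x*a1 + y*a2)^2 + (x*b1 + y*b2)^2"
    by (metis distrib_left power2_minus power_mult_distrib)
  also have "\<dots> = x^2*(a1^2 + b1^2) + y^2*(a2^2 + b2^2) + 2*x*y*(a1*a2 + b1*b2)"
    by algebra
  finally have cos: "z^2 - x^2 - y^2 = 2*x*y*(a1*a2 + b1*b2)"
    using assms(3-5) by simp
  have "(a1*a2 + b1*b2)^2 + (a1*b2 - a2*b1)^2 = (a1^2 + b1^2)*(a2^2 + b2^2)"
    by algebra
  then have sin: "(a1*b2 - a2*b1)^2 = 1 - (a1*a2 + b1*b2)^2"
    using assms(3,4) by simp
  have "heron_product x y z = (2*x*y)^2 * (1 - (a1*a2 + b1*b2)^2)"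
    unfolding heron_product_eq cos by algebra
  also have "\<dots> = 4*(x*y*(a1*b2 - a2*b1))^2"
    unfolding sin[symmetric] by (simp add: power_mult_distrib)
  finally show ?thesis .
qed

lemma abs_eq_if_unit_rows:
  fixes x y a1 a2 b1 b2 :: real
  assumes "x*a1 + y*a2 = 0" "x*b1 + y*b2 = 0" "a1^2 + b1^2 = 1" "a2^2 + b2^2 = 1"
  shows "\<bar>x\<bar> = \<bar>y\<bar>"
proof -
  have "x*a1 = -(y*a2)" "x*b1 = -(y*b2)"
    using assms(1,2) by linarith+
  then have "x^2 * (a1^2 + b1^2) = y^2 * (a2^2 + b2^2)"
    by (metis distrib_left power2_minus power_mult_distrib)
  then have "x^2 = y^2"
    using assms(3,4) by simp
  then show ?thesis
    by (metis real_sqrt_abs)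
qed

definition unit_row_frame :: "real^3 \<Rightarrow> real^3 \<Rightarrow> real^3 \<Rightarrow> bool" where
  "unit_row_frame w a b \<longleftrightarrow>
     w \<bullet> a = 0 \<and> w \<bullet> b = 0 \<and> (\<forall>i. (a$i)^2 + (b$i)^2 = 1) \<and> a \<times> b \<noteq> 0"

text \<open>The normals whose triangle of side lengths \<open>\<bar>w\<^sub>i\<bar>\<close> degenerates to a doubled segment.\<close>

definition degenerate_normal :: "real^3 \<Rightarrow> bool" where
  "degenerate_normal w \<longleftrightarrow>
     (\<exists>v \<in> {vector [0,1,1], vector [0,1,-1], vector [1,0,1],
               vector [1,0,-1], vector [1,1,0], vector [1,-1,0]}. \<exists>c. w = c *\<^sub>R v)"

lemma inner_vec3: "(w::real^3) \<bullet> x = w$1*x$1 + w$2*x$2 + w$3*x$3"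
  by (simp add: inner_vec_def sum_3)

lemma vec3_eq_iff: "(x::real^3) = y \<longleftrightarrow> x$1 = y$1 \<and> x$2 = y$2 \<and> x$3 = y$3"
  by (simp add: vec_eq_iff forall_3)

lemma span_singleton_neg: "span {- v} = span {v}"
  unfolding span_eq by (auto intro: span_base span_neg) (metis minus_minus span_base span_neg singletonI)

lemma dim_span_pair_eq_2_iff:
  fixes a b :: "real^3"
  shows "dim {a, b} = 2 \<longleftrightarrow> a \<times> b \<noteq> 0"
proof -
  have "dim {a, b} \<le> 2"
    by (rule order_trans[OF dim_le_card']) (auto simp: card_insert_if)
  moreover have "aff_dim {0, a, b} = int (dim {a, b})"
    using aff_dim_eq_dim[of 0 "{0, a, b}"] by (simp add: hull_inc dim_insert span_zero)
  ultimately show ?thesis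
    by (auto simp: cross_eq_0 collinear_aff_dim)
qed

lemma cross_eq_scaleR_normal:
  fixes w a b :: "real^3"
  assumes "norm w = 1" "w \<bullet> a = 0" "w \<bullet> b = 0"
  shows "a \<times> b = (w \<bullet> (a \<times> b)) *\<^sub>R w"
proof -
  have "w \<times> (a \<times> b) = 0"
    using assms(2,3) by (simp add: Lagrange)
  then have "(a \<times> b) \<times> w = 0"
    by (metis cross_skew neg_equal_0_iff_equal)
  then have "0 = (w \<bullet> w) *\<^sub>R (a \<times> b) - (w \<bullet> (a \<times> b)) *\<^sub>R w"
    by (metis Lagrange cross_zero_right)
  then show ?thesis
    using assms(1) by (simp add: norm_eq_1)
qed

lemma heron_product_orthogonal_unit_rows:
  fixes w a b :: "real^3"
  assumes "norm w = 1" "w \<bullet> a = 0" "w \<bullet> b = 0" "\<forall>i. (a$i)^2 + (b$i)^2 = 1"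
  shows "heron_product (w$1) (w$2) (w$3) = 4 * (w$1 * w$2 * w$3 * (w \<bullet> (a \<times> b)))^2"
proof -
  define t where "t = w \<bullet> (a \<times> b)"
  have "a \<times> b = t *\<^sub>R w"
    unfolding t_def by (rule cross_eq_scaleR_normal[OF assms(1-3)])
  have "a$1 * b$2 - a$2 * b$1 = (a \<times> b)$3"
    by (simp add: cross_components mult.commute)
  also have "\<dots> = t * w$3"
    using \<open>a \<times> b = t *\<^sub>R w\<close> by simp
  finally have "a$1 * b$2 - a$2 * b$1 = t * w$3" .
  moreover have "heron_product (w$1) (w$2) (w$3) = 4 * (w$1 * w$2 * (a$1 * b$2 - a$2 * b$1))^2"
    by (rule heron_product_unit_rows) (use assms in \<open>auto simp: inner_vec3\<close>)
  ultimately show ?thesis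
    unfolding t_def by (simp add: mult_ac)
qed

lemma degenerate_normal_if_coordinate_zero:
  fixes w :: "real^3"
  assumes "(w$1 = 0 \<and> \<bar>w$2\<bar> = \<bar>w$3\<bar>) \<or> (w$2 = 0 \<and> \<bar>w$1\<bar> = \<bar>w$3\<bar>)
    \<or> (w$3 = 0 \<and> \<bar>w$1\<bar> = \<bar>w$2\<bar>)"
  shows "degenerate_normal w"
proof -
  have "w = w$2 *\<^sub>R vector [0,1,1] \<or> w = w$2 *\<^sub>R vector [0,1,-1] \<or>
        w = w$1 *\<^sub>R vector [1,0,1] \<or> w = w$1 *\<^sub>R vector [1,0,-1] \<or>
        w = w$1 *\<^sub>R vector [1,1,0] \<or> w = w$1 *\<^sub>R vector [1,-1,0]"
    using assms by (auto simp: vec3_eq_iff abs_eq_iff)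
  then show ?thesis
    unfolding degenerate_normal_def by blast
qed

lemma heron_product_pos_or_degenerate_normal:
  fixes w a b :: "real^3"
  assumes "norm w = 1" "unit_row_frame w a b"
  shows "heron_product (w$1) (w$2) (w$3) > 0 \<or> degenerate_normal w"
proof -
  have orth: "w \<bullet> a = 0" "w \<bullet> b = 0" and rows: "\<forall>i. (a$i)^2 + (b$i)^2 = 1"
    and indep: "a \<times> b \<noteq> 0"
    using assms(2) unfolding unit_row_frame_def by auto
  show ?thesis
  proof (cases "w$1 = 0 \<or> w$2 = 0 \<or> w$3 = 0")
    case False
    have "w \<bullet> (a \<times> b) \<noteq> 0"
      using cross_eq_scaleR_normal[OF assms(1) orth] indep by force
    then have "heron_product (w$1) (w$2) (w$3) > 0"
      using False by (simp add: heron_product_orthogonal_unit_rows[OF assms(1) orth rows])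
    then show ?thesis ..
  next
    case True
    have "(a$1)^2 + (b$1)^2 = 1" "(a$2)^2 + (b$2)^2 = 1" "(a$3)^2 + (b$3)^2 = 1"
      using rows by auto
    moreover have "w$1*a$1 + w$2*a$2 + w$3*a$3 = 0" "w$1*b$1 + w$2*b$2 + w$3*b$3 = 0"
      using orth by (simp_all add: inner_vec3)
    ultimately have "(w$1 = 0 \<and> \<bar>w$2\<bar> = \<bar>w$3\<bar>) \<or> (w$2 = 0 \<and> \<bar>w$1\<bar> = \<bar>w$3\<bar>)
        \<or> (w$3 = 0 \<and> \<bar>w$1\<bar> = \<bar>w$2\<bar>)"
      using True abs_eq_if_unit_rows by auto
    then show ?thesis
      using degenerate_normal_if_coordinate_zero by blast
  qed
qed

lemma unit_row_frame_exists_if_heron_product_pos: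
  fixes w :: "real^3"
  assumes "heron_product (w$1) (w$2) (w$3) > 0"
  shows "\<exists>a b. unit_row_frame w a b"
proof -
  note nz = heron_product_pos_imp_nonzero[OF assms]
  txt \<open>The rows are \<open>(1, 0)\<close>, \<open>(c, s)\<close> with \<open>c\<close> the cosine given by the law of cosines,
    and the third row that closes the triangle.\<close>
  define c where "c = ((w$3)^2 - (w$1)^2 - (w$2)^2) / (2 * w$1 * w$2)"
  have "((w$3)^2 - (w$1)^2 - (w$2)^2)^2 < (2 * w$1 * w$2)^2"
    using assms by (simp add: heron_product_eq)
  then have "c^2 < 1"
    using nz unfolding c_def by (simp add: power_divide)
  define s where "s = sqrt (1 - c^2)"
  have s: "s > 0" "s^2 = 1 - c^2"
    unfolding s_def using \<open>c^2 < 1\<close> by simp_all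
  have cos: "2 * w$1 * w$2 * c = (w$3)^2 - (w$1)^2 - (w$2)^2"
    using nz unfolding c_def by simp
  define p where "p = w$1 + w$2 * c"
  define q where "q = w$2 * s"
  have "p^2 + q^2 = (w$3)^2"
    unfolding p_def q_def using cos s(2) by algebra
  define a :: "real^3" where "a = vector [1, c, - p / w$3]"
  define b :: "real^3" where "b = vector [0, s, - q / w$3]"
  have "(a$3)^2 + (b$3)^2 = 1"
    using \<open>p^2 + q^2 = (w$3)^2\<close> nz unfolding a_def b_def
    by (simp add: power_divide add_divide_distrib[symmetric])
  moreover have "(a$1)^2 + (b$1)^2 = 1" "(a$2)^2 + (b$2)^2 = 1"
    using s(2) unfolding a_def b_def by simp_all
  moreover have "w \<bullet> a = 0" "w \<bullet> b = 0"
    using nz unfolding a_def b_def p_def q_def by (simp_all add: inner_vec3)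
  moreover have "(a \<times> b)$3 \<noteq> 0"
    using s(1) unfolding a_def b_def by (simp add: cross_components)
  ultimately have "unit_row_frame w a b"
    unfolding unit_row_frame_def by (auto simp: forall_3)
  then show ?thesis
    by blast
qed

lemma unit_row_frame_scaleR:
  "unit_row_frame v a b \<Longrightarrow> unit_row_frame (k *\<^sub>R v) a b"
  unfolding unit_row_frame_def by simp

lemma unit_row_frame_exists_if_degenerate_normal:
  fixes w :: "real^3"
  assumes "degenerate_normal w"
  shows "\<exists>a b. unit_row_frame w a b"
proof -
  obtain v k where v: "v \<in> {vector [0,1,1], vector [0,1,-1], vector [1,0,1],
                              vector [1,0,-1], vector [1,1,0], vector [1,-1,0]}"
    and w: "w = k *\<^sub>R v"
    using assms unfolding degenerate_normal_def by blast
  txt \<open>The first column is the coordinate axis lying in \<open>v\<^sup>\<bottom>\<close>, the second one is \<open>v\<close>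
    with the sign of one nonzero entry flipped.\<close>
  from v have "\<exists>a b. unit_row_frame v a b"
  proof (elim insertE emptyE)
    assume "v = vector [0,1,1]"
    then show ?thesis
      by (intro exI[of _ "vector [1,0,0]"] exI[of _ "vector [0,1,-1]"])
        (simp add: unit_row_frame_def inner_vec3 forall_3 vec3_eq_iff cross_components)
  next
    assume "v = vector [0,1,-1]"
    then show ?thesis
      by (intro exI[of _ "vector [1,0,0]"] exI[of _ "vector [0,1,1]"])
        (simp add: unit_row_frame_def inner_vec3 forall_3 vec3_eq_iff cross_components)
  next
    assume "v = vector [1,0,1]"
    then show ?thesis
      by (intro exI[of _ "vector [0,1,0]"] exI[of _ "vector [1,0,-1]"])
        (simp add: unit_row_frame_def inner_vec3 forall_3 vec3_eq_iff cross_components)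
  next
    assume "v = vector [1,0,-1]"
    then show ?thesis
      by (intro exI[of _ "vector [0,1,0]"] exI[of _ "vector [1,0,1]"])
        (simp add: unit_row_frame_def inner_vec3 forall_3 vec3_eq_iff cross_components)
  next
    assume "v = vector [1,1,0]"
    then show ?thesis
      by (intro exI[of _ "vector [0,0,1]"] exI[of _ "vector [1,-1,0]"])
        (simp add: unit_row_frame_def inner_vec3 forall_3 vec3_eq_iff cross_components)
  next
    assume "v = vector [1,-1,0]"
    then show ?thesis
      by (intro exI[of _ "vector [0,0,1]"] exI[of _ "vector [1,1,0]"])
        (simp add: unit_row_frame_def inner_vec3 forall_3 vec3_eq_iff cross_components)
  qed
  then show ?thesis
    unfolding w using unit_row_frame_scaleR by blast
qed

lemma unit_row_frame_exists_iff:
  fixes w :: "real^3"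
  assumes "norm w = 1"
  shows "(\<exists>a b. unit_row_frame w a b) \<longleftrightarrow>
           heron_product (w$1) (w$2) (w$3) > 0 \<or> degenerate_normal w"
  using heron_product_pos_or_degenerate_normal[OF assms]
    unit_row_frame_exists_if_heron_product_pos unit_row_frame_exists_if_degenerate_normal
  by blast

lemma completely_elliptic_line_iff:
  fixes S :: "(real^3) set"
  assumes "subspace S" "dim S = 1"
  shows "completely_elliptic S \<longleftrightarrow> (\<exists>c. S = span {c} \<and> (\<forall>i. (c$i)^2 = 1))"
proof
  assume "completely_elliptic S"
  then obtain cs :: "(real^3) list" where cs: "length cs = 1" "set cs \<subseteq> S"
      "\<forall>i. (\<Sum>j<length cs. (cs ! j $ i)^2) = 1" "dim (span (set cs)) = 1"
    using assms(2) unfolding completely_elliptic_def by auto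
  then obtain c where "cs = [c]"
    by (metis One_nat_def length_0_conv length_Suc_conv)
  with cs have "c \<in> S" "\<forall>i. (c$i)^2 = 1" "dim (span {c}) = 1"
    by auto
  moreover have "span {c} = S"
    using \<open>c \<in> S\<close> \<open>dim (span {c}) = 1\<close> assms
    by (intro subspace_dim_equal) (auto simp: span_minimal)
  ultimately show "\<exists>c. S = span {c} \<and> (\<forall>i. (c$i)^2 = 1)"
    by blast
next
  assume "\<exists>c. S = span {c} \<and> (\<forall>i. (c$i)^2 = 1)"
  then obtain c where "S = span {c}" "\<forall>i. (c$i)^2 = 1"
    by blast
  then show "completely_elliptic S"
    using assms unfolding completely_elliptic_def
    by (intro conjI exI[of _ "[c]"]) (auto intro: span_base)
qed

lemma span_unit_entries_iff:
  "(\<exists>c::real^3. S = span {c} \<and> (\<forall>i. (c$i)^2 = 1)) \<longleftrightarrow>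
     S \<in> {span {vector [1,1,1]}, span {vector [-1,1,1]},
          span {vector [1,-1,1]}, span {vector [1,1,-1]}}"
proof -
  define U :: "(real^3) set"
    where "U = {vector [1,1,1], vector [-1,1,1], vector [1,-1,1], vector [1,1,-1]}"
  have lines: "{span {vector [1,1,1]}, span {vector [-1,1,1]},
                span {vector [1,-1,1]}, span {vector [1,1,-1]}} = (\<lambda>u. span {u}) ` U"
    unfolding U_def by simp
  have "(\<forall>i. (c$i)^2 = 1) \<longleftrightarrow> c \<in> U \<or> - c \<in> U" for c :: "real^3"
  proof
    assume "\<forall>i. (c$i)^2 = 1"
    then have "c$1 = 1 \<or> c$1 = -1" "c$2 = 1 \<or> c$2 = -1" "c$3 = 1 \<or> c$3 = -1"
      using power2_eq_1_iff by blast+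
    then show "c \<in> U \<or> - c \<in> U"
      unfolding U_def by (elim disjE) (simp_all add: vec3_eq_iff)
  next
    assume "c \<in> U \<or> - c \<in> U"
    then show "\<forall>i. (c$i)^2 = 1"
      unfolding U_def by (auto simp: forall_3 vec3_eq_iff)
  qed
  then show ?thesis
    unfolding lines by (auto simp: image_iff) (metis minus_minus span_singleton_neg)+
qed

lemma completely_elliptic_plane_iff:
  fixes S :: "(real^3) set"
  assumes "subspace S" "dim S = 2"
  shows "completely_elliptic S \<longleftrightarrow>
           (\<exists>a\<in>S. \<exists>b\<in>S. (\<forall>i. (a$i)^2 + (b$i)^2 = 1) \<and> a \<times> b \<noteq> 0)"
proof
  assume "completely_elliptic S"
  then obtain cs :: "(real^3) list" where cs: "length cs = 2" "set cs \<subseteq> S"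
      "\<forall>i. (\<Sum>j<length cs. (cs ! j $ i)^2) = 1" "dim (span (set cs)) = 2"
    using assms(2) unfolding completely_elliptic_def by auto
  then obtain a b where "cs = [a, b]"
    by (metis length_0_conv length_Suc_conv numeral_2_eq_2)
  with cs have "a \<in> S" "b \<in> S" "\<forall>i. (a$i)^2 + (b$i)^2 = 1" "a \<times> b \<noteq> 0"
    by (simp_all add: dim_span_pair_eq_2_iff)
  then show "\<exists>a\<in>S. \<exists>b\<in>S. (\<forall>i. (a$i)^2 + (b$i)^2 = 1) \<and> a \<times> b \<noteq> 0"
    by blast
next
  assume "\<exists>a\<in>S. \<exists>b\<in>S. (\<forall>i. (a$i)^2 + (b$i)^2 = 1) \<and> a \<times> b \<noteq> 0"
  then obtain a b where "a \<in> S" "b \<in> S" "\<forall>i. (a$i)^2 + (b$i)^2 = 1" "a \<times> b \<noteq> 0"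
    by blast
  moreover have "dim {a, b} = 2"
    using \<open>a \<times> b \<noteq> 0\<close> dim_span_pair_eq_2_iff by blast
  ultimately show "completely_elliptic S"
    using assms unfolding completely_elliptic_def
    by (intro conjI exI[of _ "[a, b]"]) simp_all
qed

lemma completely_elliptic_plane_iff_unit_row_frame:
  fixes S :: "(real^3) set"
  assumes "subspace S" "dim S = 2" "w \<noteq> 0" "\<forall>x\<in>S. w \<bullet> x = 0"
  shows "completely_elliptic S \<longleftrightarrow> (\<exists>a b. unit_row_frame w a b)"
proof -
  have "S = {x. w \<bullet> x = 0}"
  proof (rule subspace_dim_equal)
    show "dim {x. w \<bullet> x = 0} \<le> dim S"
      using dim_hyperplane[OF assms(3)] assms(2) by simp
  qed (use assms(1,4) subspace_hyperplane in auto)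
  then show ?thesis
    unfolding completely_elliptic_plane_iff[OF assms(1,2)] unit_row_frame_def
    by (simp only: mem_Collect_eq Bex_def) blast
qed

theorem mainTheorem3:
  shows "(\<forall>S :: (real^3) set. subspace S \<and> dim S = 1 \<longrightarrow>
            (completely_elliptic S \<longleftrightarrow>
               S \<in> {span {vector [1,1,1]}, span {vector [-1,1,1]},
                     span {vector [1,-1,1]}, span {vector [1,1,-1]}}))
       \<and> (\<forall>(S :: (real^3) set) (w :: real^3).
            subspace S \<and> dim S = 2 \<and> norm w = 1 \<and> (\<forall>x\<in>S. w \<bullet> x = 0) \<longrightarrow>
            (completely_elliptic S \<longleftrightarrow>
               ((w$1 + w$2 - w$3) * (w$1 - w$2 + w$3) * (- w$1 + w$2 + w$3) * (w$1 + w$2 + w$3) > 0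
                \<or> (\<exists>v \<in> {vector [0,1,1], vector [0,1,-1], vector [1,0,1],
                            vector [1,0,-1], vector [1,1,0], vector [1,-1,0]}.
                      \<exists>c::real. w = c *\<^sub>R v))))"
proof (intro conjI allI impI)
  fix S :: "(real^3) set"
  assume "subspace S \<and> dim S = 1"
  then show "completely_elliptic S \<longleftrightarrow>
               S \<in> {span {vector [1,1,1]}, span {vector [-1,1,1]},
                     span {vector [1,-1,1]}, span {vector [1,1,-1]}}"
    by (simp add: completely_elliptic_line_iff span_unit_entries_iff)
next
  fix S :: "(real^3) set" and w :: "real^3"
  assume S: "subspace S \<and> dim S = 2 \<and> norm w = 1 \<and> (\<forall>x\<in>S. w \<bullet> x = 0)"
  then have "completely_elliptic S \<longleftrightarrow> (\<exists>a b. unit_row_frame w a b)"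
    by (intro completely_elliptic_plane_iff_unit_row_frame) auto
  also have "\<dots> \<longleftrightarrow> heron_product (w$1) (w$2) (w$3) > 0 \<or> degenerate_normal w"
    using S by (simp add: unit_row_frame_exists_iff)
  finally show "completely_elliptic S \<longleftrightarrow>
               ((w$1 + w$2 - w$3) * (w$1 - w$2 + w$3) * (- w$1 + w$2 + w$3) * (w$1 + w$2 + w$3) > 0
                \<or> (\<exists>v \<in> {vector [0,1,1], vector [0,1,-1], vector [1,0,1],
                            vector [1,0,-1], vector [1,1,0], vector [1,-1,0]}.
                      \<exists>c::real. w = c *\<^sub>R v))"
    unfolding heron_product_def degenerate_normal_def .
qed

end
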